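(* Let $K\subset\mathbb{R}^d$ be nonempty, closed, convex with $\mathrm{B}_d(0)\subseteq K\subseteq R\,\mathrm{B}_d(0)$, let $f$ be convex and $L$-Lipschitz on $K$ ($L>0$), let $a>0$, $\eta>0$, and $Q=\{(x,t):x\in K,\ f(x)\le at\}\subset\mathbb{R}^{d+1}$. Then for any $\tau>0$, $$\int_{\mathbb{R}^{d+1}}e^{-at}\exp\Big(-\frac{(\mathrm{dist}(w,Q)-\tau)^2}{2\eta}\Big)\,dw\le Z_Q\,e^{\tau C_L}\Big[C_L\sqrt{2\pi\eta}\exp\Big(\frac{\eta C_L^2}2\Big)+1\Big],$$ where $w=(x,t)$, $Z_Q=\int_Qe^{-at}\,dx\,dt$ and $C_L=\sqrt{a^2+L^2}+LR+d$.
   Context: $\mathrm{dist}(w,Q)=\inf_{z\in Q}\|w-z\|$. *)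

theory Defs
  imports "HOL-Analysis.Analysis"
begin

end

theory Submission
  imports Defs "HOL-Probability.Probability" "HOL-Real_Asymp.Real_Asymp"
begin

(*
  For d >= tau, exp (-(d - tau)^2 / (2 eta)) is the probability that tau + S >= d, where S is
  Rayleigh distributed with parameter eta; for d < tau it is at most 1 = P(tau + S >= d).
  By Tonelli the left-hand side is therefore at most E mu(Q_(tau + S)), where mu has density
  exp (-a t) and Q_s = {w. dist(w, Q) <= s}.  The map (x, t) |-> (x / (1 + s), t + D s / a)
  with D = sqrt (a^2 + L^2) + L R sends Q_s into Q (because B(0) subset K subset R B(0) and
  f is L-Lipschitz), shrinks volume by (1 + s)^d and divides the density by exp (D s); hence
  mu(Q_s) <= (1 + s)^d exp (D s) Z_Q <= exp (C s) Z_Q.  Finally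
  E exp (C (tau + S)) <= exp (C tau) (1 + C sqrt (2 pi eta) exp (eta C^2 / 2)):
  write exp (C s) = exp (C tau) + int_tau^s C exp (C u) du and exchange the integrals once
  more, which leaves a Gaussian integral.
*)

definition scaled_epigraph :: "'a set \<Rightarrow> ('a \<Rightarrow> real) \<Rightarrow> real \<Rightarrow> ('a \<times> real) set" where
  "scaled_epigraph K f a = {(x, t). x \<in> K \<and> f x \<le> a * t}"

lemma scaleR_shrink_mem:
  fixes K :: "'a::real_normed_vector set"
  assumes "convex K" and "cball 0 1 \<subseteq> K" and "y \<in> K" and "dist x y \<le> s"
  shows "(1 / (1 + s)) *\<^sub>R x \<in> K"
proof (cases "s = 0")
  case True
  with assms show ?thesis by simp
next
  case False
  then have "s > 0" using assms(4) zero_le_dist[of x y] by linarith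
  define z where "z = (1 / s) *\<^sub>R (x - y)"
  have "z \<in> K"
    using assms(2,4) \<open>s > 0\<close> by (auto simp: z_def dist_norm divide_le_eq_1)
  moreover have "(1 / (1 + s)) *\<^sub>R x = (1 - s / (1 + s)) *\<^sub>R y + (s / (1 + s)) *\<^sub>R z"
    using \<open>s > 0\<close> by (simp add: z_def field_simps scaleR_diff_right)
  ultimately show ?thesis
    using convexD[OF assms(1) assms(3)] \<open>s > 0\<close> by simp
qed

lemma dist_shrink_le:
  fixes x y :: "'a::real_normed_vector"
  assumes "s \<ge> 0"
  shows "dist ((1 / (1 + s)) *\<^sub>R x) y \<le> dist x y + s * norm y"
proof -
  have "(1 / (1 + s)) *\<^sub>R x - y = (1 / (1 + s)) *\<^sub>R ((x - y) - s *\<^sub>R y)"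
    using assms by (simp add: field_simps scaleR_diff_right scaleR_add_left[symmetric])
  then have "dist ((1 / (1 + s)) *\<^sub>R x) y = norm ((x - y) - s *\<^sub>R y) / (1 + s)"
    using assms by (simp add: dist_norm)
  also have "\<dots> \<le> norm ((x - y) - s *\<^sub>R y) / 1"
    using assms by (intro divide_left_mono) auto
  also have "\<dots> \<le> dist x y + s * norm y"
    using norm_triangle_ineq4[of "x - y" "s *\<^sub>R y"] assms by (simp add: dist_norm)
  finally show ?thesis .
qed

lemma shrink_shift_mem_scaled_epigraph:
  fixes K :: "'a::real_normed_vector set"
  assumes "convex K" and "cball 0 1 \<subseteq> K" and "K \<subseteq> cball 0 R"
    and "L-lipschitz_on K f" and "a > 0"
    and "(y, \<sigma>) \<in> scaled_epigraph K f a" and "dist (x, t) (y, \<sigma>) \<le> s"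
  shows "((1 / (1 + s)) *\<^sub>R x, t + (sqrt (a\<^sup>2 + L\<^sup>2) + L * R) * s / a) \<in> scaled_epigraph K f a"
proof -
  let ?x = "(1 / (1 + s)) *\<^sub>R x"
  have y: "y \<in> K" "f y \<le> a * \<sigma>" using assms(6) by (simp_all add: scaled_epigraph_def)
  have dist_xt: "sqrt ((dist x y)\<^sup>2 + (dist t \<sigma>)\<^sup>2) \<le> s"
    using assms(7) by (simp add: dist_Pair_Pair)
  then have "dist x y \<le> s" by (metis order_trans real_sqrt_sum_squares_ge1)
  then have "s \<ge> 0" by (metis zero_le_dist order_trans)
  have "?x \<in> K" by (rule scaleR_shrink_mem[OF assms(1,2) y(1) \<open>dist x y \<le> s\<close>])
  have "L \<ge> 0" using assms(4) lipschitz_on_nonneg by blast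
  have "norm y \<le> R" using y(1) assms(3) by auto
  have "L * dist x y + a * dist t \<sigma> \<le> sqrt (L\<^sup>2 + a\<^sup>2) * sqrt ((dist x y)\<^sup>2 + (dist t \<sigma>)\<^sup>2)"
    using norm_cauchy_schwarz[of "(L, a)" "(dist x y, dist t \<sigma>)"] by (simp add: norm_Pair)
  also have "\<dots> \<le> sqrt (a\<^sup>2 + L\<^sup>2) * s"
    using mult_left_mono[OF dist_xt, of "sqrt (a\<^sup>2 + L\<^sup>2)"] by (simp add: add.commute)
  finally have cauchy_schwarz: "L * dist x y + a * dist t \<sigma> \<le> sqrt (a\<^sup>2 + L\<^sup>2) * s" .
  have "dist ?x y \<le> dist x y + s * R"
    using dist_shrink_le[OF \<open>s \<ge> 0\<close>, of x y] mult_left_mono[OF \<open>norm y \<le> R\<close> \<open>s \<ge> 0\<close>]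
    by linarith
  have "f ?x \<le> f y + L * dist ?x y"
    using lipschitz_onD[OF assms(4) \<open>?x \<in> K\<close> y(1)] by (simp add: dist_real_def)
  also have "\<dots> \<le> f y + L * (dist x y + s * R)"
    using \<open>dist ?x y \<le> dist x y + s * R\<close> \<open>L \<ge> 0\<close> by (simp add: mult_left_mono)
  also have "\<dots> \<le> a * t + (L * dist x y + a * dist t \<sigma>) + L * R * s"
    using y(2) \<open>a > 0\<close> mult_left_mono[OF abs_ge_self[of "\<sigma> - t"], of a]
    by (simp add: dist_real_def abs_minus_commute algebra_simps)
  also have "\<dots> \<le> a * t + (sqrt (a\<^sup>2 + L\<^sup>2) + L * R) * s"
    using cauchy_schwarz by (simp add: algebra_simps)
  also have "\<dots> = a * (t + (sqrt (a\<^sup>2 + L\<^sup>2) + L * R) * s / a)"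
    using \<open>a > 0\<close> by (simp add: field_simps)
  finally show ?thesis
    using \<open>?x \<in> K\<close> by (simp add: scaled_epigraph_def)
qed

lemma closed_scaled_epigraph:
  assumes "closed K" and "continuous_on K f"
  shows "closed (scaled_epigraph K f a)"
proof -
  have "continuous_on (K \<times> UNIV) (\<lambda>w. f (fst w) - a * snd w)"
    by (intro continuous_intros continuous_on_compose2[OF assms(2)]) auto
  then have "closed ((K \<times> UNIV) \<inter> (\<lambda>w. f (fst w) - a * snd w) -` {..0})"
    by (rule continuous_closed_preimage) (auto intro: closed_Times assms(1))
  moreover have "(K \<times> UNIV) \<inter> (\<lambda>w. f (fst w) - a * snd w) -` {..0} = scaled_epigraph K f a"
    by (auto simp: scaled_epigraph_def)
  ultimately show ?thesis by simp
qed

lemma nn_integral_lborel_scaleR: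
  fixes \<phi> :: "'a::euclidean_space \<Rightarrow> ennreal"
  assumes [measurable]: "\<phi> \<in> borel_measurable borel" and "c > 0"
  shows "(\<integral>\<^sup>+x. \<phi> ((1 / c) *\<^sub>R x) \<partial>lborel) = ennreal (c ^ DIM('a)) * (\<integral>\<^sup>+x. \<phi> x \<partial>lborel)"
proof -
  have lborel_eq: "(lborel::'a measure) = density (distr lborel borel (\<lambda>x. 0 + c *\<^sub>R x)) (\<lambda>_. \<bar>c\<bar> ^ DIM('a))"
    by (rule lborel_affine) (use \<open>c > 0\<close> in simp)
  have "(\<integral>\<^sup>+x. \<phi> ((1 / c) *\<^sub>R x) \<partial>lborel)
      = (\<integral>\<^sup>+x. ennreal (\<bar>c\<bar> ^ DIM('a)) * \<phi> ((1 / c) *\<^sub>R (0 + c *\<^sub>R x)) \<partial>lborel)"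
    by (subst (1) lborel_eq) (simp add: nn_integral_density nn_integral_distr)
  also have "\<dots> = (\<integral>\<^sup>+x. ennreal (c ^ DIM('a)) * \<phi> x \<partial>lborel)"
    using \<open>c > 0\<close> by simp
  finally show ?thesis by (simp add: nn_integral_cmult)
qed

lemma nn_integral_lborel_scaleR_shift:
  fixes G :: "'a::euclidean_space \<times> real \<Rightarrow> ennreal"
  assumes [measurable]: "G \<in> borel_measurable borel" and "c > 0"
  shows "(\<integral>\<^sup>+w. G ((1 / c) *\<^sub>R fst w, snd w + b) \<partial>lborel)
    = ennreal (c ^ DIM('a)) * (\<integral>\<^sup>+w. G w \<partial>lborel)"
proof -
  have [measurable]: "G \<in> borel_measurable (lborel \<Otimes>\<^sub>M lborel)"
    by (simp add: lborel_prod)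
  define \<phi> where "\<phi> x = (\<integral>\<^sup>+t. G (x, t) \<partial>lborel)" for x
  have [measurable]: "\<phi> \<in> borel_measurable borel"
    unfolding \<phi>_def using lborel.borel_measurable_nn_integral_fst[of G] by simp
  have "(\<integral>\<^sup>+w. G ((1 / c) *\<^sub>R fst w, snd w + b) \<partial>lborel)
      = (\<integral>\<^sup>+w. G ((1 / c) *\<^sub>R fst w, snd w + b) \<partial>(lborel \<Otimes>\<^sub>M lborel))"
    by (simp add: lborel_prod)
  also have "\<dots> = (\<integral>\<^sup>+x. \<integral>\<^sup>+t. G ((1 / c) *\<^sub>R x, t + b) \<partial>lborel \<partial>lborel)"
    by (subst lborel.nn_integral_fst[symmetric]) simp_all
  also have "\<dots> = (\<integral>\<^sup>+x. \<phi> ((1 / c) *\<^sub>R x) \<partial>lborel)"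
    unfolding \<phi>_def
    using nn_integral_real_affine[of "\<lambda>t. G (_, t)" 1 b] by (simp add: add.commute)
  also have "\<dots> = ennreal (c ^ DIM('a)) * (\<integral>\<^sup>+x. \<phi> x \<partial>lborel)"
    by (rule nn_integral_lborel_scaleR) (simp_all add: \<open>c > 0\<close>)
  also have "(\<integral>\<^sup>+x. \<phi> x \<partial>lborel) = (\<integral>\<^sup>+w. G w \<partial>lborel)"
    unfolding \<phi>_def by (simp add: lborel_prod lborel.nn_integral_fst)
  finally show ?thesis .
qed

lemma shrink_shift_mem_scaled_epigraph_of_infdist:
  fixes K :: "'a::euclidean_space set"
  assumes "K \<noteq> {}" and "closed K" and "convex K"
    and "cball 0 1 \<subseteq> K" and "K \<subseteq> cball 0 R"
    and "L-lipschitz_on K f" and "a > 0"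
    and "infdist w (scaled_epigraph K f a) \<le> s"
  shows "((1 / (1 + s)) *\<^sub>R fst w, snd w + (sqrt (a\<^sup>2 + L\<^sup>2) + L * R) * s / a) \<in> scaled_epigraph K f a"
proof -
  obtain x0 where "x0 \<in> K" using assms(1) by blast
  then have "(x0, f x0 / a) \<in> scaled_epigraph K f a"
    using \<open>a > 0\<close> by (simp add: scaled_epigraph_def)
  then have nonempty: "scaled_epigraph K f a \<noteq> {}" by blast
  have closed: "closed (scaled_epigraph K f a)"
    by (rule closed_scaled_epigraph[OF assms(2) lipschitz_on_continuous_on[OF assms(6)]])
  obtain q where "q \<in> scaled_epigraph K f a" and "infdist w (scaled_epigraph K f a) = dist w q"
    by (rule infdist_attains_inf[OF closed nonempty])
  moreover obtain y \<sigma> where "q = (y, \<sigma>)" by (cases q)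
  ultimately show ?thesis
    using shrink_shift_mem_scaled_epigraph[OF assms(3-7), of y \<sigma> "fst w" "snd w" s] assms(8) by simp
qed

lemma nn_integral_infdist_le_exp:
  fixes K :: "'a::euclidean_space set"
  assumes "K \<noteq> {}" and "closed K" and "convex K"
    and "cball 0 1 \<subseteq> K" and "K \<subseteq> cball 0 R"
    and "L-lipschitz_on K f" and "a > 0"
  defines "Q \<equiv> scaled_epigraph K f a" and "D \<equiv> sqrt (a\<^sup>2 + L\<^sup>2) + L * R"
  shows "(\<integral>\<^sup>+w. ennreal (exp (- a * snd w)) * indicator {w. infdist w Q \<le> s} w \<partial>lborel)
    \<le> ennreal (exp (s * (D + real DIM('a)))) * (\<integral>\<^sup>+w. ennreal (exp (- a * snd w)) * indicator Q w \<partial>lborel)"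
proof (cases "s < 0")
  case True
  then have "{w. infdist w Q \<le> s} = {}"
    using infdist_nonneg by (metis (mono_tags, lifting) empty_Collect_eq linorder_not_le order_less_le_trans)
  show ?thesis unfolding \<open>{w. infdist w Q \<le> s} = {}\<close> by simp
next
  case False
  have "closed Q"
    unfolding Q_def by (rule closed_scaled_epigraph[OF assms(2) lipschitz_on_continuous_on[OF assms(6)]])
  define G where "G w = ennreal (exp (- a * snd w)) * indicator Q w" for w :: "'a \<times> real"
  have "(\<lambda>w::'a \<times> real. exp (- a * snd w)) \<in> borel_measurable borel"
    by (intro borel_measurable_continuous_onI continuous_intros)
  then have [measurable]: "G \<in> borel_measurable borel"
    unfolding G_def
    by (intro borel_measurable_times_ennreal measurable_compose[OF _ measurable_ennreal]
        borel_measurable_indicator borel_closed \<open>closed Q\<close>)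
  define T where "T w = ((1 / (1 + s)) *\<^sub>R fst w, snd w + D * s / a)" for w :: "'a \<times> real"
  have [measurable]: "T \<in> borel_measurable borel"
    unfolding T_def by (intro borel_measurable_continuous_onI continuous_intros)
  have "ennreal (exp (- a * snd w)) * indicator {w. infdist w Q \<le> s} w \<le> ennreal (exp (D * s)) * G (T w)"
    for w
  proof (cases "infdist w Q \<le> s")
    case True
    then have "T w \<in> Q"
      unfolding Q_def D_def T_def by (rule shrink_shift_mem_scaled_epigraph_of_infdist[OF assms(1-7)])
    moreover have "exp (- a * snd w) = exp (D * s) * exp (- a * snd (T w))"
      using \<open>a > 0\<close> by (simp add: T_def exp_add[symmetric] algebra_simps)
    ultimately show ?thesis using True by (simp add: G_def ennreal_mult)
  qed simp
  then have "(\<integral>\<^sup>+w. ennreal (exp (- a * snd w)) * indicator {w. infdist w Q \<le> s} w \<partial>lborel)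
      \<le> (\<integral>\<^sup>+w. ennreal (exp (D * s)) * G (T w) \<partial>lborel)"
    by (rule nn_integral_mono)
  also have "\<dots> = ennreal (exp (D * s)) * (\<integral>\<^sup>+w. G (T w) \<partial>lborel)"
    by (rule nn_integral_cmult) simp
  also have "(\<integral>\<^sup>+w. G (T w) \<partial>lborel) = ennreal ((1 + s) ^ DIM('a)) * (\<integral>\<^sup>+w. G w \<partial>lborel)"
    unfolding T_def by (rule nn_integral_lborel_scaleR_shift) (use False in simp_all)
  also have "ennreal (exp (D * s)) * (ennreal ((1 + s) ^ DIM('a)) * (\<integral>\<^sup>+w. G w \<partial>lborel))
      \<le> ennreal (exp (s * (D + real DIM('a)))) * (\<integral>\<^sup>+w. G w \<partial>lborel)"
  proof -
    have "(1 + s) ^ DIM('a) \<le> exp s ^ DIM('a)"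
      using False by (intro power_mono) (auto simp: add.commute exp_ge_add_one_self_aux)
    then have "exp (D * s) * (1 + s) ^ DIM('a) \<le> exp (s * (D + real DIM('a)))"
      by (simp add: exp_add exp_of_nat_mult[symmetric] algebra_simps)
    then show ?thesis
      using False by (simp add: ennreal_mult[symmetric] mult.assoc[symmetric] mult_right_mono)
  qed
  finally show ?thesis unfolding G_def .
qed

definition shifted_rayleigh_density :: "real \<Rightarrow> real \<Rightarrow> real \<Rightarrow> ennreal" where
  "shifted_rayleigh_density \<tau> \<eta> s =
     ennreal ((s - \<tau>) / \<eta> * exp (- (s - \<tau>)\<^sup>2 / (2 * \<eta>))) * indicator {\<tau>..} s"

lemma borel_measurable_shifted_rayleigh_density [measurable]:
  "shifted_rayleigh_density \<tau> \<eta> \<in> borel_measurable borel"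
  unfolding shifted_rayleigh_density_def by measurable

lemma nn_integral_shifted_rayleigh_tail:
  assumes "\<eta> > 0" and "\<tau> \<le> b"
  shows "(\<integral>\<^sup>+s. shifted_rayleigh_density \<tau> \<eta> s * indicator {b..} s \<partial>lborel)
    = ennreal (exp (- (b - \<tau>)\<^sup>2 / (2 * \<eta>)))"
proof -
  have "(\<integral>\<^sup>+s. shifted_rayleigh_density \<tau> \<eta> s * indicator {b..} s \<partial>lborel)
      = (\<integral>\<^sup>+s. ennreal ((s - \<tau>) / \<eta> * exp (- (s - \<tau>)\<^sup>2 / (2 * \<eta>))) * indicator {b..} s \<partial>lborel)"
    using \<open>\<tau> \<le> b\<close>
    by (intro nn_integral_cong) (simp add: shifted_rayleigh_density_def split: split_indicator)
  also have "\<dots> = 0 - (- exp (- (b - \<tau>)\<^sup>2 / (2 * \<eta>)))"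
  proof (rule nn_integral_FTC_atLeast)
    show "((\<lambda>x. - exp (- (x - \<tau>)\<^sup>2 / (2 * \<eta>))) \<longlongrightarrow> 0) at_top"
      using \<open>\<eta> > 0\<close> by real_asymp
    show "((\<lambda>x. - exp (- (x - \<tau>)\<^sup>2 / (2 * \<eta>)))
        has_real_derivative (x - \<tau>) / \<eta> * exp (- (x - \<tau>)\<^sup>2 / (2 * \<eta>))) (at x)" for x
      using \<open>\<eta> > 0\<close> by (auto intro!: derivative_eq_intros simp: field_simps power2_eq_square)
    show "0 \<le> (x - \<tau>) / \<eta> * exp (- (x - \<tau>)\<^sup>2 / (2 * \<eta>))" if "b \<le> x" for x
      using that assms by simp
  qed measurable
  finally show ?thesis by simp
qed

lemma exp_gaussian_le_shifted_rayleigh_tail: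
  assumes "\<eta> > 0"
  shows "ennreal (exp (- (d - \<tau>)\<^sup>2 / (2 * \<eta>)))
    \<le> (\<integral>\<^sup>+s. shifted_rayleigh_density \<tau> \<eta> s * indicator {d..} s \<partial>lborel)"
proof -
  have "(\<integral>\<^sup>+s. shifted_rayleigh_density \<tau> \<eta> s * indicator {d..} s \<partial>lborel)
      = (\<integral>\<^sup>+s. shifted_rayleigh_density \<tau> \<eta> s * indicator {max d \<tau>..} s \<partial>lborel)"
    by (intro nn_integral_cong) (simp add: shifted_rayleigh_density_def split: split_indicator)
  also have "\<dots> = ennreal (exp (- (max d \<tau> - \<tau>)\<^sup>2 / (2 * \<eta>)))"
    using \<open>\<eta> > 0\<close> by (simp add: nn_integral_shifted_rayleigh_tail)
  finally show ?thesis
    using \<open>\<eta> > 0\<close> by (auto simp: max_def intro!: ennreal_leI)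
qed

lemma nn_integral_exp_mult_gaussian:
  assumes "\<eta> > 0"
  shows "(\<integral>\<^sup>+u. ennreal (exp (C * u) * exp (- (u - \<tau>)\<^sup>2 / (2 * \<eta>))) \<partial>lborel)
    = ennreal (exp (C * \<tau> + \<eta> * C\<^sup>2 / 2) * sqrt (2 * pi * \<eta>))"
proof -
  define m where "m = \<tau> + \<eta> * C"
  have "exp (C * u) * exp (- (u - \<tau>)\<^sup>2 / (2 * \<eta>))
      = exp (C * \<tau> + \<eta> * C\<^sup>2 / 2) * sqrt (2 * pi * \<eta>) * normal_density m (sqrt \<eta>) u" for u
  proof -
    have "C * u + - (u - \<tau>)\<^sup>2 / (2 * \<eta>) = (C * \<tau> + \<eta> * C\<^sup>2 / 2) + - (u - m)\<^sup>2 / (2 * \<eta>)"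
      using \<open>\<eta> > 0\<close> by (simp add: m_def field_simps power2_eq_square)
    then show ?thesis
      using \<open>\<eta> > 0\<close> by (simp add: normal_density_def exp_add[symmetric])
  qed
  then have "(\<integral>\<^sup>+u. ennreal (exp (C * u) * exp (- (u - \<tau>)\<^sup>2 / (2 * \<eta>))) \<partial>lborel)
      = (\<integral>\<^sup>+u. ennreal (exp (C * \<tau> + \<eta> * C\<^sup>2 / 2) * sqrt (2 * pi * \<eta>))
               * ennreal (normal_density m (sqrt \<eta>) u) \<partial>lborel)"
    using \<open>\<eta> > 0\<close> by (intro nn_integral_cong) (simp add: ennreal_mult)
  also have "\<dots> = ennreal (exp (C * \<tau> + \<eta> * C\<^sup>2 / 2) * sqrt (2 * pi * \<eta>))
      * (\<integral>\<^sup>+u. ennreal (normal_density m (sqrt \<eta>) u) \<partial>lborel)"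
    by (rule nn_integral_cmult) simp
  also have "(\<integral>\<^sup>+u. ennreal (normal_density m (sqrt \<eta>) u) \<partial>lborel) = 1"
    using \<open>\<eta> > 0\<close>
    by (subst nn_integral_eq_integral) (auto intro!: integrable_normal_density integral_normal_density)
  finally show ?thesis by simp
qed

lemma nn_integral_threshold_swap:
  fixes g :: "'a \<Rightarrow> ennreal" and h :: "'a \<Rightarrow> real" and \<rho> :: "real \<Rightarrow> ennreal"
  assumes "sigma_finite_measure M"
    and [measurable]: "g \<in> borel_measurable M" "h \<in> borel_measurable M" "\<rho> \<in> borel_measurable borel"
  shows "(\<integral>\<^sup>+w. g w * (\<integral>\<^sup>+s. \<rho> s * indicator {h w..} s \<partial>lborel) \<partial>M)
    = (\<integral>\<^sup>+s. \<rho> s * (\<integral>\<^sup>+w. g w * indicator {w. h w \<le> s} w \<partial>M) \<partial>lborel)"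
proof -
  interpret pair_sigma_finite M lborel
    by (intro pair_sigma_finite.intro assms(1) sigma_finite_lborel)
  define H where "H w s = g w * \<rho> s * indicator {h w..} s" for w s
  have "(\<lambda>(w, s). H w s) \<in> borel_measurable (M \<Otimes>\<^sub>M lborel)"
    unfolding H_def by measurable (unfold atLeast_iff, measurable)
  have "(\<integral>\<^sup>+w. g w * (\<integral>\<^sup>+s. \<rho> s * indicator {h w..} s \<partial>lborel) \<partial>M)
      = (\<integral>\<^sup>+w. \<integral>\<^sup>+s. H w s \<partial>lborel \<partial>M)"
    by (intro nn_integral_cong) (simp add: H_def mult.assoc nn_integral_cmult)
  also have "\<dots> = (\<integral>\<^sup>+s. \<integral>\<^sup>+w. H w s \<partial>M \<partial>lborel)"
    by (rule Fubini'[symmetric]) fact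
  also have "\<dots> = (\<integral>\<^sup>+s. \<rho> s * (\<integral>\<^sup>+w. g w * indicator {w. h w \<le> s} w \<partial>M) \<partial>lborel)"
    by (intro nn_integral_cong)
      (auto simp: H_def nn_integral_cmult[symmetric] mult_ac intro!: nn_integral_cong split: split_indicator)
  finally show ?thesis .
qed

lemma ennreal_exp_eq_plus_nn_integral:
  assumes "C \<ge> 0" and "\<tau> \<le> s"
  shows "ennreal (exp (s * C))
    = ennreal (exp (\<tau> * C)) + (\<integral>\<^sup>+u. ennreal (C * exp (C * u)) * indicator {\<tau>..s} u \<partial>lborel)"
proof -
  have "(\<integral>\<^sup>+u. ennreal (C * exp (C * u)) * indicator {\<tau>..s} u \<partial>lborel) = ennreal (exp (C * s) - exp (C * \<tau>))"
    using assms by (intro nn_integral_FTC_Icc) (auto intro!: derivative_eq_intros)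
  moreover have "exp (C * \<tau>) \<le> exp (C * s)"
    using assms by (simp add: mult_left_mono)
  ultimately show ?thesis
    by (simp add: ennreal_plus[symmetric] mult.commute del: ennreal_plus)
qed

lemma nn_integral_shifted_rayleigh_exp_le:
  assumes "\<eta> > 0" and "C \<ge> 0"
  shows "(\<integral>\<^sup>+s. shifted_rayleigh_density \<tau> \<eta> s * ennreal (exp (s * C)) \<partial>lborel)
    \<le> ennreal (exp (\<tau> * C) * (C * sqrt (2 * pi * \<eta>) * exp (\<eta> * C\<^sup>2 / 2) + 1))"
proof -
  let ?\<rho> = "shifted_rayleigh_density \<tau> \<eta>"
  define g where "g u = ennreal (C * exp (C * u)) * indicator {\<tau>..} u" for u
  have [measurable]: "g \<in> borel_measurable borel"
    unfolding g_def by measurable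
  have exp_split: "?\<rho> s * ennreal (exp (s * C))
      = ?\<rho> s * ennreal (exp (\<tau> * C)) + ?\<rho> s * (\<integral>\<^sup>+u. g u * indicator {u. u \<le> s} u \<partial>lborel)" for s
  proof (cases "\<tau> \<le> s")
    case True
    have "(\<integral>\<^sup>+u. g u * indicator {u. u \<le> s} u \<partial>lborel)
        = (\<integral>\<^sup>+u. ennreal (C * exp (C * u)) * indicator {\<tau>..s} u \<partial>lborel)"
      by (intro nn_integral_cong) (simp add: g_def split: split_indicator)
    then show ?thesis
      using ennreal_exp_eq_plus_nn_integral[OF \<open>C \<ge> 0\<close> True] by (simp add: distrib_left)
  qed (simp add: shifted_rayleigh_density_def)
  have "(\<integral>\<^sup>+s. ?\<rho> s * ennreal (exp (s * C)) \<partial>lborel)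
      = (\<integral>\<^sup>+s. ?\<rho> s \<partial>lborel) * ennreal (exp (\<tau> * C))
        + (\<integral>\<^sup>+s. ?\<rho> s * (\<integral>\<^sup>+u. g u * indicator {u. u \<le> s} u \<partial>lborel) \<partial>lborel)"
    unfolding exp_split by (simp add: nn_integral_add nn_integral_multc)
  also have "(\<integral>\<^sup>+s. ?\<rho> s \<partial>lborel) = (\<integral>\<^sup>+s. ?\<rho> s * indicator {\<tau>..} s \<partial>lborel)"
    by (intro nn_integral_cong) (simp add: shifted_rayleigh_density_def split: split_indicator)
  also have "\<dots> = 1"
    using nn_integral_shifted_rayleigh_tail[OF \<open>\<eta> > 0\<close> order_refl, of \<tau>] by simp
  also have "(\<integral>\<^sup>+s. ?\<rho> s * (\<integral>\<^sup>+u. g u * indicator {u. u \<le> s} u \<partial>lborel) \<partial>lborel)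
      = (\<integral>\<^sup>+u. g u * (\<integral>\<^sup>+s. ?\<rho> s * indicator {u..} s \<partial>lborel) \<partial>lborel)"
    by (rule nn_integral_threshold_swap[OF sigma_finite_lborel, symmetric]) measurable
  also have "\<dots> = (\<integral>\<^sup>+u. g u * ennreal (exp (- (u - \<tau>)\<^sup>2 / (2 * \<eta>))) \<partial>lborel)"
    using \<open>\<eta> > 0\<close>
    by (intro nn_integral_cong) (simp add: g_def nn_integral_shifted_rayleigh_tail split: split_indicator)
  also have "\<dots> \<le> (\<integral>\<^sup>+u. ennreal C * ennreal (exp (C * u) * exp (- (u - \<tau>)\<^sup>2 / (2 * \<eta>))) \<partial>lborel)"
    using \<open>C \<ge> 0\<close>
    by (intro nn_integral_mono) (simp add: g_def ennreal_mult[symmetric] split: split_indicator)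
  also have "\<dots> = ennreal C * ennreal (exp (C * \<tau> + \<eta> * C\<^sup>2 / 2) * sqrt (2 * pi * \<eta>))"
    using nn_integral_exp_mult_gaussian[OF \<open>\<eta> > 0\<close>, of C \<tau>] by (simp add: nn_integral_cmult)
  also have "1 * ennreal (exp (\<tau> * C)) + \<dots>
      = ennreal (exp (\<tau> * C) + C * (exp (C * \<tau> + \<eta> * C\<^sup>2 / 2) * sqrt (2 * pi * \<eta>)))"
    using \<open>C \<ge> 0\<close> \<open>\<eta> > 0\<close> by (simp add: ennreal_mult)
  also have "exp (\<tau> * C) + C * (exp (C * \<tau> + \<eta> * C\<^sup>2 / 2) * sqrt (2 * pi * \<eta>))
      = exp (\<tau> * C) * (C * sqrt (2 * pi * \<eta>) * exp (\<eta> * C\<^sup>2 / 2) + 1)"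
    by (simp add: exp_add algebra_simps)
  finally show ?thesis by (simp add: add_left_mono)
qed

theorem lemma2:
  fixes K :: "(real ^ 'd) set" and f :: "real ^ 'd \<Rightarrow> real"
    and R L a \<eta> \<tau> :: real
  assumes "K \<noteq> {}" and "closed K" and "convex K"
    and "cball 0 1 \<subseteq> K" and "K \<subseteq> cball 0 R"
    and "convex_on K f" and "L-lipschitz_on K f" and "L > 0"
    and "a > 0" and "\<eta> > 0" and "\<tau> > 0"
  defines "Q \<equiv> {(x, t). x \<in> K \<and> f x \<le> a * t}"
    and "C \<equiv> sqrt (a\<^sup>2 + L\<^sup>2) + L * R + real CARD('d)"
  shows "(\<integral>\<^sup>+ w. ennreal (exp (- a * snd w) *
             exp (- (infdist w Q - \<tau>)\<^sup>2 / (2 * \<eta>))) \<partial>lborel)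
         \<le> (\<integral>\<^sup>+ w. ennreal (exp (- a * snd w)) * indicator Q w \<partial>lborel)
            * ennreal (exp (\<tau> * C) *
                (C * sqrt (2 * pi * \<eta>) * exp (\<eta> * C\<^sup>2 / 2) + 1))"
proof -
  let ?\<rho> = "shifted_rayleigh_density \<tau> \<eta>"
  let ?Z = "\<integral>\<^sup>+ w. ennreal (exp (- a * snd w)) * indicator Q w \<partial>lborel"
  have "Q = scaled_epigraph K f a" by (simp add: Q_def scaled_epigraph_def)
  have "R \<ge> 0" using assms(4,5) by (meson centre_in_cball mem_cball_0 norm_zero subsetD zero_le_one order_trans)
  then have "C \<ge> 0" using \<open>L > 0\<close> by (simp add: C_def)
  have [measurable]: "(\<lambda>w::(real ^ 'd) \<times> real. exp (- a * snd w)) \<in> borel_measurable borel"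
    "(\<lambda>w::(real ^ 'd) \<times> real. infdist w Q) \<in> borel_measurable borel"
    by (intro borel_measurable_continuous_onI continuous_intros)+
  have "ennreal (exp (- a * snd w) * exp (- (infdist w Q - \<tau>)\<^sup>2 / (2 * \<eta>)))
      = ennreal (exp (- a * snd w)) * ennreal (exp (- (infdist w Q - \<tau>)\<^sup>2 / (2 * \<eta>)))" for w
    by (rule ennreal_mult) simp_all
  then have "(\<integral>\<^sup>+ w. ennreal (exp (- a * snd w) * exp (- (infdist w Q - \<tau>)\<^sup>2 / (2 * \<eta>))) \<partial>lborel)
      \<le> (\<integral>\<^sup>+ w. ennreal (exp (- a * snd w)) * (\<integral>\<^sup>+s. ?\<rho> s * indicator {infdist w Q..} s \<partial>lborel) \<partial>lborel)"
    using exp_gaussian_le_shifted_rayleigh_tail[OF \<open>\<eta> > 0\<close>]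
    by (intro nn_integral_mono) (simp only: mult_left_mono zero_le)
  also have "\<dots> = (\<integral>\<^sup>+s. ?\<rho> s * (\<integral>\<^sup>+ w. ennreal (exp (- a * snd w)) * indicator {w. infdist w Q \<le> s} w \<partial>lborel) \<partial>lborel)"
    by (rule nn_integral_threshold_swap[OF sigma_finite_lborel]) measurable
  also have "\<dots> \<le> (\<integral>\<^sup>+s. ?\<rho> s * (ennreal (exp (s * C)) * ?Z) \<partial>lborel)"
    using nn_integral_infdist_le_exp[OF assms(1-5,7,9)] \<open>Q = scaled_epigraph K f a\<close>
    by (intro nn_integral_mono mult_left_mono) (simp_all add: C_def add.assoc)
  also have "\<dots> = (\<integral>\<^sup>+s. ?\<rho> s * ennreal (exp (s * C)) \<partial>lborel) * ?Z"
    unfolding mult.assoc[symmetric] by (rule nn_integral_multc) measurable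
  also have "\<dots> \<le> ennreal (exp (\<tau> * C) * (C * sqrt (2 * pi * \<eta>) * exp (\<eta> * C\<^sup>2 / 2) + 1)) * ?Z"
    by (intro mult_right_mono nn_integral_shifted_rayleigh_exp_le \<open>\<eta> > 0\<close> \<open>C \<ge> 0\<close>) simp
  finally show ?thesis by (simp add: mult.commute)
qed

end
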